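(* Let $K$ be a field of characteristic $\neq 2$, let $n\ge 1$, and let $\mathcal C$ be an evolution algebra of a "chicken" population (EACP) over $K$ with natural basis $\{h_1,\dots,h_n,r\}$ and structural constants $a_{ij},b_i\in K$ ($i,j=1,\dots,n$). Then $\mathcal C$ is associative if and only if $$\sum_{j=1}^n a_{ij}a_{jk}=0\quad\text{and}\quad b_i=0\qquad\text{for all } i,k=1,\dots,n.$$
   Context: An EACP over a field $K$ (characteristic $\neq 2$) is a $K$-algebra $\mathcal C$ with a basis $\{h_1,\dots,h_n,r\}$ (called a natural basis) whose multiplication is determined by bilinearity from $$h_ir=rh_i=\tfrac12\Big(\sum_{j=1}^n a_{ij}h_j+b_ir\Big),\qquad h_ih_j=0\ (i,j=1,\dots,n),\qquad rr=0,$$ for some constants $a_{ij},b_i\in K$. The $n\times(n+1)$ matrix $M$ whose $i$-th row is $(a_{i1},\dots,a_{in},b_i)$ is called the matrix of structural constants. *)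

theory Defs
  imports Main
begin

text \<open>A finite-dimensional algebra over a field with basis e_0,...,e_N is
represented on coordinate vectors (functions nat => 'a vanishing outside {0..N}).
c i j k is the k-th coordinate of the product e_i e_j; the product is extended
bilinearly.\<close>

definition coord_space :: "nat \<Rightarrow> (nat \<Rightarrow> 'a::zero) set" where
  "coord_space N = {v. \<forall>k>N. v k = 0}"

definition alg_mult :: "nat \<Rightarrow> (nat \<Rightarrow> nat \<Rightarrow> nat \<Rightarrow> 'a::field)
    \<Rightarrow> (nat \<Rightarrow> 'a) \<Rightarrow> (nat \<Rightarrow> 'a) \<Rightarrow> (nat \<Rightarrow> 'a)" where
  "alg_mult N c x y = (\<lambda>k. if k \<le> N then (\<Sum>i\<le>N. \<Sum>j\<le>N. x i * y j * c i j k) else 0)"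

definition alg_associative :: "nat \<Rightarrow> (nat \<Rightarrow> nat \<Rightarrow> nat \<Rightarrow> 'a::field) \<Rightarrow> bool" where
  "alg_associative N c \<longleftrightarrow>
     (\<forall>x\<in>coord_space N. \<forall>y\<in>coord_space N. \<forall>z\<in>coord_space N.
        alg_mult N c (alg_mult N c x y) z = alg_mult N c x (alg_mult N c y z))"

text \<open>EACP with natural basis h_1..h_n, r: basis index i (1 <= i <= n) is h_i,
basis index 0 is r. Structural constants a i j, b i for i,j in {1..n}.
h_i r = r h_i = 1/2 (sum_j a_ij h_j + b_i r), h_i h_j = 0, r r = 0.\<close>

definition eacp_const :: "nat \<Rightarrow> (nat \<Rightarrow> nat \<Rightarrow> 'a) \<Rightarrow> (nat \<Rightarrow> 'a)
    \<Rightarrow> nat \<Rightarrow> nat \<Rightarrow> nat \<Rightarrow> 'a::field" where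
  "eacp_const n a b i j k =
     (if (1 \<le> i \<and> i \<le> n \<and> j = 0) \<or> (i = 0 \<and> 1 \<le> j \<and> j \<le> n) then
        (let l = max i j in
          if k = 0 then b l / 2 else if 1 \<le> k \<and> k \<le> n then a l k / 2 else 0)
      else 0)"

end

theory Submission
  imports Defs
begin

text \<open>The product of an EACP is commutative, and every product xy lies in the span of
  the row vectors \<open>\<Sum>\<^sub>j a\<^sub>i\<^sub>j h\<^sub>j + b\<^sub>i r\<close>. Evaluating associativity on the basis triples
  \<open>(h\<^sub>i, h\<^sub>i, r)\<close> and \<open>(h\<^sub>i, r, r)\<close> forces \<open>b\<^sub>i\<^sup>2 = 0\<close> and \<open>(A\<^sup>2)\<^sub>i\<^sub>k = 0\<close>. Conversely,
  when \<open>b = 0\<close> and \<open>A\<^sup>2 = 0\<close> every product xy is a combination of the \<open>h\<^sub>j\<close> whose product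
  with anything is a combination of rows of \<open>A\<^sup>2\<close>, so all products \<open>(xy)z\<close> vanish;
  together with commutativity this gives \<open>(xy)z = 0 = (yz)x = x(yz)\<close>.\<close>

definition basis_vec :: "nat \<Rightarrow> nat \<Rightarrow> 'a::zero_neq_one" where
  "basis_vec p = (\<lambda>k. if k = p then 1 else 0)"

lemma basis_vec_in_coord_space: "p \<le> N \<Longrightarrow> basis_vec p \<in> coord_space N"
  by (simp add: basis_vec_def coord_space_def)

lemma alg_mult_commute:
  assumes "\<And>i j k. c i j k = c j i k"
  shows "alg_mult N c x y = alg_mult N c y x"
  unfolding alg_mult_def
  by (rule ext) (subst sum.swap, simp add: assms mult_ac)

lemma alg_mult_zero_left: "alg_mult N c (\<lambda>_. 0) y = (\<lambda>_. 0)"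
  by (rule ext) (simp add: alg_mult_def)

text \<open>Row \<open>l\<close> of the matrix of structural constants, with \<open>b\<^sub>l\<close> moved to column 0 (the index
  of \<open>r\<close>); for \<open>1 \<le> l \<le> n\<close> its entries are the coordinates of \<open>2 h\<^sub>l r\<close>.\<close>

definition eacp_row :: "(nat \<Rightarrow> nat \<Rightarrow> 'a) \<Rightarrow> (nat \<Rightarrow> 'a) \<Rightarrow> nat \<Rightarrow> nat \<Rightarrow> 'a" where
  "eacp_row a b l k = (if k = 0 then b l else a l k)"

lemma eacp_const_sym: "eacp_const n a b i j k = eacp_const n a b j i k"
  by (auto simp: eacp_const_def Let_def max.commute)

lemma eacp_const_mixed:
  assumes "1 \<le> i" "i \<le> n" "k \<le> n"
  shows "eacp_const n a b i 0 k = eacp_row a b i k / 2"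
    and "eacp_const n a b 0 i k = eacp_row a b i k / 2"
  using assms by (auto simp: eacp_const_def eacp_row_def Let_def)

lemma eacp_const_pure:
  assumes "(1 \<le> i \<and> 1 \<le> j) \<or> (i = 0 \<and> j = 0)"
  shows "eacp_const n a b i j k = 0"
  using assms by (auto simp: eacp_const_def)

lemma eacp_mult_apply:
  "alg_mult n (eacp_const n a b) x y k =
    (if k \<le> n then (\<Sum>l=1..n. (x l * y 0 + x 0 * y l) * eacp_row a b l k) / 2 else 0)"
proof (cases "k \<le> n")
  case True
  have split: "{..n} = insert 0 {1..n}" by auto
  have "(\<Sum>i\<le>n. \<Sum>j\<le>n. x i * y j * eacp_const n a b i j k)
      = (\<Sum>j=1..n. x 0 * y j * eacp_const n a b 0 j k)
        + (\<Sum>i=1..n. x i * y 0 * eacp_const n a b i 0 k)"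
    by (simp add: split eacp_const_pure)
  also have "\<dots> = (\<Sum>l=1..n. (x l * y 0 + x 0 * y l) * eacp_row a b l k) / 2"
    using True by (simp add: eacp_const_mixed sum_divide_distrib sum.distrib[symmetric]
        algebra_simps add_divide_distrib)
  finally show ?thesis using True by (simp add: alg_mult_def)
qed (simp add: alg_mult_def)

lemma eacp_mult_commute: "alg_mult n (eacp_const n a b) x y = alg_mult n (eacp_const n a b) y x"
  by (rule alg_mult_commute) (rule eacp_const_sym)

lemma eacp_mult_basis_vec_h_right:
  assumes "1 \<le> j" "j \<le> n"
  shows "alg_mult n (eacp_const n a b) x (basis_vec j)
    = (\<lambda>k. if k \<le> n then x 0 * eacp_row a b j k / 2 else 0)"
proof (rule ext)
  fix k
  have "(\<Sum>l=1..n. (x l * basis_vec j 0 + x 0 * basis_vec j l) * eacp_row a b l k)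
      = (\<Sum>l=1..n. if l = j then x 0 * eacp_row a b j k else 0)"
    using assms by (intro sum.cong) (auto simp: basis_vec_def)
  then show "alg_mult n (eacp_const n a b) x (basis_vec j) k
      = (if k \<le> n then x 0 * eacp_row a b j k / 2 else 0)"
    using assms by (simp add: eacp_mult_apply)
qed

lemma eacp_mult_basis_vec_r_right:
  "alg_mult n (eacp_const n a b) x (basis_vec 0)
    = (\<lambda>k. if k \<le> n then (\<Sum>l=1..n. x l * eacp_row a b l k) / 2 else 0)"
  by (rule ext) (simp add: eacp_mult_apply basis_vec_def)

lemma eacp_mult_h_r:
  assumes "1 \<le> i" "i \<le> n"
  shows "alg_mult n (eacp_const n a b) (basis_vec i) (basis_vec 0)
    = (\<lambda>k. if k \<le> n then eacp_row a b i k / 2 else 0)"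
  unfolding eacp_mult_basis_vec_r_right
  using assms by (simp add: basis_vec_def if_distrib[of "\<lambda>v. v * _"] cong: if_cong)

lemma eacp_mult_h_h:
  assumes "1 \<le> i" "1 \<le> j" "j \<le> n"
  shows "alg_mult n (eacp_const n a b) (basis_vec i) (basis_vec j) = (\<lambda>_. 0)"
  unfolding eacp_mult_basis_vec_h_right[OF assms(2,3)]
  using assms by (intro ext) (simp add: basis_vec_def)

lemma eacp_mult_r_r: "alg_mult n (eacp_const n a b) (basis_vec 0) (basis_vec 0) = (\<lambda>_. 0)"
  unfolding eacp_mult_basis_vec_r_right by (intro ext) (simp add: basis_vec_def)

lemma eacp_associative_imp_b_zero:
  fixes a :: "nat \<Rightarrow> nat \<Rightarrow> 'a::field"
  assumes assoc: "alg_associative n (eacp_const n a b)" and two: "(2::'a) \<noteq> 0"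
    and i: "1 \<le> i" "i \<le> n"
  shows "b i = 0"
proof -
  let ?m = "alg_mult n (eacp_const n a b)" and ?h = "basis_vec i" and ?r = "basis_vec 0"
  have "?m (?m ?h ?h) ?r = (\<lambda>_. 0)"
    using i by (simp add: eacp_mult_h_h alg_mult_zero_left)
  moreover have "?m (?m ?h ?h) ?r = ?m ?h (?m ?h ?r)"
    using assoc i basis_vec_in_coord_space unfolding alg_associative_def by blast
  also have "\<dots> = ?m (?m ?h ?r) ?h"
    by (rule eacp_mult_commute)
  also have "\<dots> = (\<lambda>k. if k \<le> n then b i / 2 * eacp_row a b i k / 2 else 0)"
    unfolding eacp_mult_basis_vec_h_right[OF i] eacp_mult_h_r[OF i] eacp_row_def by simp
  ultimately have "b i / 2 * eacp_row a b i 0 / 2 = 0"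
    by (metis zero_le)
  then show ?thesis using two by (metis eacp_row_def divide_eq_0_iff mult_eq_0_iff)
qed

lemma eacp_associative_imp_a_square_zero:
  fixes a :: "nat \<Rightarrow> nat \<Rightarrow> 'a::field"
  assumes assoc: "alg_associative n (eacp_const n a b)" and two: "(2::'a) \<noteq> 0"
    and i: "1 \<le> i" "i \<le> n" and k: "1 \<le> k" "k \<le> n"
  shows "(\<Sum>j=1..n. a i j * a j k) = 0"
proof -
  let ?m = "alg_mult n (eacp_const n a b)" and ?h = "basis_vec i" and ?r = "basis_vec 0"
  have "?m (?m ?h ?r) ?r = ?m ?h (?m ?r ?r)"
    using assoc i basis_vec_in_coord_space unfolding alg_associative_def by blast
  also have "\<dots> = (\<lambda>_. 0)"
    by (simp add: eacp_mult_r_r eacp_mult_commute[of _ _ _ ?h] alg_mult_zero_left)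
  finally have "?m (?m ?h ?r) ?r k = 0" by simp
  moreover have "?m (?m ?h ?r) ?r k = (\<Sum>j=1..n. a i j / 2 * a j k) / 2"
    unfolding eacp_mult_h_r[OF i] using k by (simp add: eacp_mult_basis_vec_r_right eacp_row_def)
  moreover have "(\<Sum>j=1..n. a i j / 2 * a j k) = (\<Sum>j=1..n. a i j * a j k) / 2"
    by (simp add: sum_divide_distrib)
  ultimately show ?thesis using two by (metis divide_eq_0_iff)
qed

lemma eacp_mult_mult_eq_zero:
  fixes a :: "nat \<Rightarrow> nat \<Rightarrow> 'a::field"
  assumes a_square: "\<forall>i\<in>{1..n}. \<forall>k\<in>{1..n}. (\<Sum>j=1..n. a i j * a j k) = 0"
    and b: "\<forall>i\<in>{1..n}. b i = 0"
  shows "alg_mult n (eacp_const n a b) (alg_mult n (eacp_const n a b) x y) z = (\<lambda>_. 0)"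
proof (rule ext)
  fix k
  define w where "w = alg_mult n (eacp_const n a b) x y"
  let ?P = "\<lambda>m. x m * y 0 + x 0 * y m"
  have row_r: "eacp_row a b l 0 = 0" if "l \<in> {1..n}" for l
    using b that by (simp add: eacp_row_def)
  have w_r: "w 0 = 0"
    using row_r by (simp add: w_def eacp_mult_apply)
  show "alg_mult n (eacp_const n a b) w z k = 0"
  proof (cases "k \<in> {1..n}")
    case False
    then consider "k = 0" | "n < k" by force
    then show ?thesis using row_r by cases (simp_all add: eacp_mult_apply)
  next
    case True
    have "alg_mult n (eacp_const n a b) w z k = (\<Sum>l=1..n. w l * a l k) * z 0 / 2"
      using True w_r by (simp add: eacp_mult_apply eacp_row_def sum_distrib_left mult_ac)
    also have "(\<Sum>l=1..n. w l * a l k) = (\<Sum>l=1..n. \<Sum>m=1..n. ?P m * (a m l * a l k)) / 2"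
      by (simp add: w_def eacp_mult_apply eacp_row_def sum_distrib_left sum_divide_distrib mult_ac)
    also have "(\<Sum>l=1..n. \<Sum>m=1..n. ?P m * (a m l * a l k))
        = (\<Sum>m=1..n. ?P m * (\<Sum>l=1..n. a m l * a l k))"
      by (subst sum.swap) (simp add: sum_distrib_left)
    also have "\<dots> = 0"
      using a_square True by simp
    finally show ?thesis by simp
  qed
qed

theorem mainTheorem1:
  fixes a :: "nat \<Rightarrow> nat \<Rightarrow> 'a::field" and b :: "nat \<Rightarrow> 'a" and n :: nat
  assumes "(2::'a) \<noteq> 0" and "n \<ge> 1"
  shows "alg_associative n (eacp_const n a b) \<longleftrightarrow>
    ((\<forall>i\<in>{1..n}. \<forall>k\<in>{1..n}. (\<Sum>j=1..n. a i j * a j k) = 0) \<and> (\<forall>i\<in>{1..n}. b i = 0))"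
proof
  assume "alg_associative n (eacp_const n a b)"
  then show "(\<forall>i\<in>{1..n}. \<forall>k\<in>{1..n}. (\<Sum>j=1..n. a i j * a j k) = 0) \<and> (\<forall>i\<in>{1..n}. b i = 0)"
    using assms(1) eacp_associative_imp_a_square_zero eacp_associative_imp_b_zero by auto
next
  assume "(\<forall>i\<in>{1..n}. \<forall>k\<in>{1..n}. (\<Sum>j=1..n. a i j * a j k) = 0) \<and> (\<forall>i\<in>{1..n}. b i = 0)"
  then have "alg_mult n (eacp_const n a b) (alg_mult n (eacp_const n a b) x y) z = (\<lambda>_. 0)"
    for x y z
    using eacp_mult_mult_eq_zero by blast
  then show "alg_associative n (eacp_const n a b)"
    unfolding alg_associative_def by (metis eacp_mult_commute)
qed

end
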